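(* Let $\Omega=[-1,1]$, $\mathbb{X}=C([-1,1])$ with the supremum norm, $J=[t_0,t_0+T]$, and assume the standing setup below. For $n\in\mathbb{N}$ let $h_x=2/n$, $x_i=-1+ih_x$ ($i=0,\dots,n$), let $\ell_i$ be the continuous piecewise-linear "hat" functions with $\ell_i(x_j)=\delta_{ij}$ and breakpoints $\{x_j\}$ (supported on $[x_{i-1},x_{i+1}]\cap[-1,1]$), $\mathbb{X}_n=\mathrm{span}\{\ell_0,\dots,\ell_n\}$, and $P_nv=\sum_{j=0}^n v(x_j)\ell_j$. For $u_0\in\mathbb{X}$, let $u$ solve $u'=N(t,u)$, $u(t_0)=u_0$ and $u_n$ solve $u_n'=P_nN(t,u_n)$, $u_n(t_0)=P_nu_0$. Then $\|u-u_n\|_{C(J,\mathbb{X})}\to0$ as $n\to\infty$. If moreover $u\in C(J,C^2([-1,1]))$, there exists a constant $\kappa_u>0$, depending on $u$ but not on $n$, such that $\|u-u_n\|_{C(J,\mathbb{X})}\le\kappa_uh_x^2$, so the error is $O(n^{-2})$.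
   Context: Standing setup: the kernel $w$ on $[-1,1]^2$ satisfies $\lim_{h\to0}\sup_{|x-z|\le h}\int_{-1}^1|w(x,y)-w(z,y)|dy=0$ and $\sup_{x}\int_{-1}^1|w(x,y)|dy<\infty$; $f:\mathbb{R}\to\mathbb{R}$ is bounded, everywhere differentiable and Lipschitz with $f,f'$ bounded; $\xi\in C(J,\mathbb{X})$. $F(u)(x)=f(u(x))$, $(Wu)(x)=\int_{-1}^1w(x,y)u(y)dy$, $N(t,u)=-u+WF(u)+\xi(t)$. Solutions are $C^1(J,\mathbb{X})$ functions satisfying the equation on $J$. $\|v\|_{C(J,\mathbb{X})}=\max_{t\in J}\|v(t)\|_\infty$. *)

theory Defs
  imports "HOL-Analysis.Analysis"
begin

text \<open>Elements of X = C([-1,1]) are represented by functions real => real that are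
 continuous on [-1,1]; only their values on [-1,1] matter.\<close>

definition Xsp :: "(real \<Rightarrow> real) set" where
  "Xsp = {v. continuous_on {-1..1} v}"

definition supn :: "(real \<Rightarrow> real) \<Rightarrow> real" where
  "supn v = (SUP x\<in>{-1..1}. \<bar>v x\<bar>)"

definition normCJX :: "real set \<Rightarrow> (real \<Rightarrow> real \<Rightarrow> real) \<Rightarrow> real" where
  "normCJX J v = (SUP t\<in>J. supn (v t))"

definition contJX :: "real set \<Rightarrow> (real \<Rightarrow> real \<Rightarrow> real) \<Rightarrow> bool" where
  "contJX J v \<longleftrightarrow> (\<forall>t\<in>J. v t \<in> Xsp) \<and>
     (\<forall>t\<in>J. \<forall>e>0. \<exists>d>0. \<forall>s\<in>J. \<bar>s - t\<bar> < d \<longrightarrow> supn (\<lambda>x. v s x - v t x) < e)"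

definition X_deriv :: "real set \<Rightarrow> (real \<Rightarrow> real \<Rightarrow> real) \<Rightarrow> (real \<Rightarrow> real) \<Rightarrow> real \<Rightarrow> bool" where
  "X_deriv J u d t \<longleftrightarrow>
     ((\<lambda>s. supn (\<lambda>x. (u s x - u t x) / (s - t) - d x)) \<longlongrightarrow> 0) (at t within J)"

definition is_solution ::
  "real set \<Rightarrow> real \<Rightarrow> (real \<Rightarrow> (real \<Rightarrow> real) \<Rightarrow> (real \<Rightarrow> real)) \<Rightarrow> (real \<Rightarrow> real)
   \<Rightarrow> (real \<Rightarrow> real \<Rightarrow> real) \<Rightarrow> bool" where
  "is_solution J t0 G u0 u \<longleftrightarrow>
     contJX J u \<and> contJX J (\<lambda>t. G t (u t)) \<and>
     (\<forall>t\<in>J. X_deriv J u (G t (u t)) t) \<and>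
     (\<forall>x\<in>{-1..1}. u t0 x = u0 x)"

definition Wop :: "(real \<Rightarrow> real \<Rightarrow> real) \<Rightarrow> (real \<Rightarrow> real) \<Rightarrow> (real \<Rightarrow> real)" where
  "Wop w v = (\<lambda>x. integral {-1..1} (\<lambda>y. w x y * v y))"

definition Fop :: "(real \<Rightarrow> real) \<Rightarrow> (real \<Rightarrow> real) \<Rightarrow> (real \<Rightarrow> real)" where
  "Fop f v = (\<lambda>x. f (v x))"

definition Nop :: "(real \<Rightarrow> real \<Rightarrow> real) \<Rightarrow> (real \<Rightarrow> real) \<Rightarrow> (real \<Rightarrow> real \<Rightarrow> real)
   \<Rightarrow> real \<Rightarrow> (real \<Rightarrow> real) \<Rightarrow> (real \<Rightarrow> real)" where
  "Nop w f \<xi> t v = (\<lambda>x. - v x + Wop w (Fop f v) x + \<xi> t x)"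

definition hx :: "nat \<Rightarrow> real" where
  "hx n = 2 / real n"

definition node :: "nat \<Rightarrow> nat \<Rightarrow> real" where
  "node n i = -1 + real i * hx n"

definition hat :: "nat \<Rightarrow> nat \<Rightarrow> real \<Rightarrow> real" where
  "hat n i x = max 0 (1 - \<bar>x - node n i\<bar> / hx n)"

definition Pn :: "nat \<Rightarrow> (real \<Rightarrow> real) \<Rightarrow> (real \<Rightarrow> real)" where
  "Pn n v = (\<lambda>x. \<Sum>j=0..n. v (node n j) * hat n j x)"

definition C2_with :: "(real \<Rightarrow> real) \<Rightarrow> (real \<Rightarrow> real) \<Rightarrow> (real \<Rightarrow> real) \<Rightarrow> bool" where
  "C2_with v d1 d2 \<longleftrightarrow>
     (\<forall>x\<in>{-1..1}. (v has_real_derivative d1 x) (at x within {-1..1})) \<and>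
     (\<forall>x\<in>{-1..1}. (d1 has_real_derivative d2 x) (at x within {-1..1})) \<and>
     continuous_on {-1..1} d2"

text \<open>u \<in> C(J, C^2([-1,1])) with the C^2 norm |v| + |v'| + |v''|.\<close>
definition in_CJ_C2 :: "real set \<Rightarrow> (real \<Rightarrow> real \<Rightarrow> real) \<Rightarrow> bool" where
  "in_CJ_C2 J u \<longleftrightarrow> (\<exists>D1 D2. (\<forall>t\<in>J. C2_with (u t) (D1 t) (D2 t)) \<and>
      contJX J u \<and> contJX J D1 \<and> contJX J D2)"

end

theory Submission imports Defs begin

text \<open>Write the error as u - u_n = (u - P_n u) + (P_n u - u_n). Because P_n u(t) only samples
  nodal values and is at every point a convex combination of two of them, the second term satisfies
  |d/dt (P_n u - u_n)| <= K sup |u - u_n|, with K the sup-norm Lipschitz constant of N. Gronwall's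
  inequality then bounds |u - u_n| by exp(K T) times the interpolation error sup |u - P_n u|, which
  tends to 0 by uniform continuity of u on J x [-1,1], and is O(h_x^2) when u_xx is bounded.\<close>

section \<open>The sup norm on C([-1,1]) and on C(J, C([-1,1]))\<close>

lemma supn_least:
  fixes v :: "real \<Rightarrow> real"
  assumes "\<And>x. x \<in> {-1..1} \<Longrightarrow> \<bar>v x\<bar> \<le> c"
  shows "supn v \<le> c"
  unfolding supn_def by (rule cSUP_least) (use assms in auto)

lemma abs_le_supn:
  fixes v :: "real \<Rightarrow> real"
  assumes "continuous_on {-1..1} v" and "x \<in> {-1..1}"
  shows "\<bar>v x\<bar> \<le> supn v"
proof -
  have "bounded (v ` {-1..1})"
    using assms(1) by (intro compact_imp_bounded compact_continuous_image) auto
  then obtain c where "\<forall>y\<in>{-1..1}. \<bar>v y\<bar> \<le> c"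
    unfolding bounded_iff by auto
  then show ?thesis
    unfolding supn_def using assms(2) by (intro cSUP_upper bdd_aboveI2) auto
qed

lemma supn_nonneg: "continuous_on {-1..1} v \<Longrightarrow> 0 \<le> supn v"
  using abs_le_supn[of v 0] by auto

lemma abs_supn_diff_le:
  fixes a b :: "real \<Rightarrow> real"
  assumes "continuous_on {-1..1} a" "continuous_on {-1..1} b"
  shows "\<bar>supn a - supn b\<bar> \<le> supn (\<lambda>x. a x - b x)"
proof -
  have "\<bar>a x\<bar> \<le> supn (\<lambda>x. a x - b x) + supn b \<and> \<bar>b x\<bar> \<le> supn (\<lambda>x. a x - b x) + supn a"
    if x: "x \<in> {-1..1}" for x
  proof -
    have "\<bar>a x - b x\<bar> \<le> supn (\<lambda>x. a x - b x)"
      using assms x by (intro abs_le_supn) (auto intro!: continuous_intros)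
    then show ?thesis using abs_le_supn[OF assms(1) x] abs_le_supn[OF assms(2) x] by linarith
  qed
  then have "supn a \<le> supn (\<lambda>x. a x - b x) + supn b" "supn b \<le> supn (\<lambda>x. a x - b x) + supn a"
    by (auto intro!: supn_least)
  then show ?thesis by linarith
qed

lemma normCJX_bounds:
  assumes "t1 \<in> J" and "\<And>t. t \<in> J \<Longrightarrow> continuous_on {-1..1} (E t) \<and> supn (E t) \<le> c"
  shows "0 \<le> normCJX J E \<and> normCJX J E \<le> c"
proof
  have "supn (E t1) \<le> normCJX J E"
    unfolding normCJX_def using assms by (intro cSUP_upper bdd_aboveI2) auto
  then show "0 \<le> normCJX J E"
    using supn_nonneg assms by (meson order_trans)
  show "normCJX J E \<le> c"
    unfolding normCJX_def using assms by (intro cSUP_least) auto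
qed

lemma contJX_diff:
  assumes "contJX J u" "contJX J v"
  shows "contJX J (\<lambda>t x. u t x - v t x)"
  unfolding contJX_def
proof (intro conjI ballI allI impI)
  have c: "continuous_on {-1..1} (u t)" "continuous_on {-1..1} (v t)" if "t \<in> J" for t
    using assms that unfolding contJX_def Xsp_def by auto
  then show "(\<lambda>x. u t x - v t x) \<in> Xsp" if "t \<in> J" for t
    using that unfolding Xsp_def by (auto intro!: continuous_intros)
  fix t e :: real assume t: "t \<in> J" and e: "0 < e"
  obtain d1 where d1: "d1 > 0" "\<forall>s\<in>J. \<bar>s - t\<bar> < d1 \<longrightarrow> supn (\<lambda>x. u s x - u t x) < e/2"
    using assms(1) t e unfolding contJX_def by (meson half_gt_zero)
  obtain d2 where d2: "d2 > 0" "\<forall>s\<in>J. \<bar>s - t\<bar> < d2 \<longrightarrow> supn (\<lambda>x. v s x - v t x) < e/2"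
    using assms(2) t e unfolding contJX_def by (meson half_gt_zero)
  show "\<exists>d>0. \<forall>s\<in>J. \<bar>s - t\<bar> < d \<longrightarrow> supn (\<lambda>x. u s x - v s x - (u t x - v t x)) < e"
  proof (intro exI[of _ "min d1 d2"] conjI ballI impI)
    fix s assume s: "s \<in> J" and st: "\<bar>s - t\<bar> < min d1 d2"
    have "supn (\<lambda>x. u s x - v s x - (u t x - v t x))
        \<le> supn (\<lambda>x. u s x - u t x) + supn (\<lambda>x. v s x - v t x)"
    proof (rule supn_least)
      fix x :: real assume "x \<in> {-1..1}"
      then have "\<bar>u s x - u t x\<bar> \<le> supn (\<lambda>x. u s x - u t x)"
        "\<bar>v s x - v t x\<bar> \<le> supn (\<lambda>x. v s x - v t x)"
        using c s t by (auto intro!: abs_le_supn continuous_intros)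
      then show "\<bar>u s x - v s x - (u t x - v t x)\<bar>
          \<le> supn (\<lambda>x. u s x - u t x) + supn (\<lambda>x. v s x - v t x)" by linarith
    qed
    also have "\<dots> < e" using d1 d2 s st by force
    finally show "supn (\<lambda>x. u s x - v s x - (u t x - v t x)) < e" .
  qed (use d1 d2 in auto)
qed

lemma continuous_on_supn:
  assumes "contJX J v"
  shows "continuous_on J (\<lambda>s. supn (v s))"
  unfolding continuous_on_iff
proof (intro ballI allI impI)
  fix t e :: real assume t: "t \<in> J" and e: "0 < e"
  obtain d where d: "d > 0" "\<forall>s\<in>J. \<bar>s - t\<bar> < d \<longrightarrow> supn (\<lambda>x. v s x - v t x) < e"
    using assms t e unfolding contJX_def by meson
  have "dist (supn (v s)) (supn (v t)) < e" if "s \<in> J" "dist s t < d" for s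
    using abs_supn_diff_le[of "v s" "v t"] assms that t d
    unfolding contJX_def Xsp_def dist_real_def by fastforce
  then show "\<exists>d>0. \<forall>s\<in>J. dist s t < d \<longrightarrow> dist (supn (v s)) (supn (v t)) < e"
    using d(1) by blast
qed

lemma contJX_imp_continuous_on_Times:
  assumes "contJX J g"
  shows "continuous_on (J \<times> {-1..1}) (\<lambda>p. g (fst p) (snd p))"
  unfolding continuous_on_iff
proof (intro ballI allI impI)
  fix p :: "real \<times> real" and e :: real assume p: "p \<in> J \<times> {-1..1}" and e: "0 < e"
  obtain t x where px: "p = (t, x)" "t \<in> J" "x \<in> {-1..1}" using p by auto
  have cg: "continuous_on {-1..1} (g s)" if "s \<in> J" for s
    using assms that unfolding contJX_def Xsp_def by auto
  obtain d1 where d1: "d1 > 0" "\<forall>s\<in>J. \<bar>s - t\<bar> < d1 \<longrightarrow> supn (\<lambda>x. g s x - g t x) < e/2"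
    using assms px e unfolding contJX_def by (meson half_gt_zero)
  obtain d2 where d2: "d2 > 0" "\<forall>y\<in>{-1..1}. dist y x < d2 \<longrightarrow> dist (g t y) (g t x) < e/2"
    using cg[OF px(2)] px e unfolding continuous_on_iff by (meson half_gt_zero)
  have "dist (g s y) (g t x) < e" if q: "(s, y) \<in> J \<times> {-1..1}" "dist (s, y) p < min d1 d2" for s y
  proof -
    have "dist s t < d1" "dist y x < d2"
      using q dist_fst_le[of "(s, y)" p] dist_snd_le[of "(s, y)" p] px by auto
    then have "supn (\<lambda>x. g s x - g t x) < e/2" "dist (g t y) (g t x) < e/2"
      using d1 d2 q by (auto simp: dist_real_def)
    moreover have "\<bar>g s y - g t y\<bar> \<le> supn (\<lambda>x. g s x - g t x)"
      using cg px q by (auto intro!: abs_le_supn continuous_intros)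
    moreover have "\<bar>g s y - g t x\<bar> \<le> \<bar>g s y - g t y\<bar> + \<bar>g t y - g t x\<bar>" by linarith
    ultimately show ?thesis unfolding dist_real_def by linarith
  qed
  then show "\<exists>d>0. \<forall>q\<in>J \<times> {-1..1}. dist q p < d \<longrightarrow> dist (g (fst q) (snd q)) (g (fst p) (snd p)) < e"
    using d1 d2 px by (intro exI[of _ "min d1 d2"]) auto
qed

lemma X_deriv_imp_has_real_derivative:
  assumes "contJX J v" "continuous_on {-1..1} d" "X_deriv J v d t" "t \<in> J" "x \<in> {-1..1}"
  shows "((\<lambda>s. v s x) has_real_derivative d x) (at t within J)"
  unfolding has_field_derivative_iff
proof -
  have "((\<lambda>s. (v s x - v t x) / (s - t) - d x) \<longlongrightarrow> 0) (at t within J)"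
  proof (rule Lim_null_comparison)
    show "((\<lambda>s. supn (\<lambda>x. (v s x - v t x) / (s - t) - d x)) \<longlongrightarrow> 0) (at t within J)"
      using assms(3) unfolding X_deriv_def .
    have "norm ((v s x - v t x) / (s - t) - d x) \<le> supn (\<lambda>x. (v s x - v t x) / (s - t) - d x)"
      if "s \<in> J" for s
    proof -
      have "continuous_on {-1..1} (\<lambda>x. (v s x - v t x) / (s - t) - d x)"
        using assms that unfolding contJX_def Xsp_def by (cases "s = t") (auto intro!: continuous_intros)
      then show ?thesis unfolding real_norm_def by (rule abs_le_supn[OF _ assms(5)])
    qed
    then show "\<forall>\<^sub>F s in at t within J.
        norm ((v s x - v t x) / (s - t) - d x) \<le> supn (\<lambda>x. (v s x - v t x) / (s - t) - d x)"
      by (auto simp: eventually_at_filter)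
  qed
  then show "((\<lambda>s. (v s x - v t x) / (s - t)) \<longlongrightarrow> d x) (at t within J)"
    using LIM_zero_iff by blast
qed

section \<open>Piecewise-linear interpolation on the uniform grid\<close>

lemma hx_pos: "n \<ge> 1 \<Longrightarrow> hx n > 0"
  by (simp add: hx_def)

lemma node_in: "j \<le> n \<Longrightarrow> node n j \<in> {-1..1}"
  by (cases "n = 0") (auto simp: node_def hx_def field_simps)

lemma node_diff: "node n j - node n i = (real j - real i) * hx n"
  by (simp add: node_def algebra_simps)

lemma node_Suc: "node n (Suc i) = node n i + hx n"
  by (simp add: node_def algebra_simps)

lemma cell_containing:
  assumes "n \<ge> 1" and "x \<in> {-1..1}"
  obtains i where "i < n" "node n i \<le> x" "x \<le> node n (Suc i)"
proof -
  define h where "h = hx n"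
  have h: "h > 0" "real n * h = 2" using assms(1) by (simp_all add: h_def hx_def)
  define k where "k = nat \<lfloor>(x + 1) / h\<rfloor>"
  define i where "i = min k (n - 1)"
  have k: "real k \<le> (x + 1) / h" "(x + 1) / h < real k + 1"
    using assms(2) h unfolding k_def by (auto simp: of_nat_nat)
  have "real i * h \<le> real k * h"
    using h by (intro mult_right_mono) (auto simp: i_def)
  moreover have "real k * h \<le> x + 1"
    using k(1) h by (simp add: pos_le_divide_eq)
  ultimately have "real i * h \<le> x + 1" by linarith
  moreover have "x + 1 \<le> (real i + 1) * h"
  proof (cases "k \<le> n - 1")
    case True
    then show ?thesis using k h by (simp add: i_def pos_divide_less_eq less_imp_le)
  next
    case False
    then have "real i + 1 = real n" using assms(1) by (simp add: i_def)
    then show ?thesis using h assms(2) by simp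
  qed
  ultimately show ?thesis
    using assms(1) that[of i] by (simp add: i_def node_def h_def algebra_simps)
qed

lemma hat_outside_cell:
  assumes "n \<ge> 1" "node n i \<le> x" "x \<le> node n (Suc i)" "j \<notin> {i, Suc i}"
  shows "hat n j x = 0"
proof -
  have h: "hx n > 0" using hx_pos assms(1) .
  have "hx n \<le> \<bar>x - node n j\<bar>"
  proof (cases "j < i")
    case True
    then have "(real j - real i) * hx n \<le> - hx n"
      using h mult_right_mono[of "real j - real i" "-1" "hx n"] by simp
    then show ?thesis using node_diff[of n j i] assms(2) by linarith
  next
    case False
    then have "2 * hx n \<le> (real j - real i) * hx n"
      using assms(4) h mult_right_mono[of 2 "real j - real i" "hx n"] by simp
    then show ?thesis using node_diff[of n j i] node_Suc[of n i] assms(3) by linarith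
  qed
  then show ?thesis using h by (simp add: hat_def field_simps)
qed

lemma Pn_on_cell:
  assumes "n \<ge> 1" and "x \<in> {-1..1}"
  obtains i s where "i < n" "0 \<le> s" "s \<le> 1" "node n i \<le> x" "x \<le> node n (Suc i)"
    "s * hx n = x - node n i"
    "\<And>v. Pn n v x = (1 - s) * v (node n i) + s * v (node n (Suc i))"
proof -
  obtain i where i: "i < n" "node n i \<le> x" "x \<le> node n (Suc i)"
    using cell_containing[OF assms] .
  have h: "hx n > 0" using hx_pos assms(1) .
  define s where "s = (x - node n i) / hx n"
  have s: "0 \<le> s" "s \<le> 1" "s * hx n = x - node n i"
    using i h node_Suc[of n i] by (auto simp: s_def)
  have hats: "hat n i x = 1 - s" "hat n (Suc i) x = s"
    using i h s node_Suc[of n i] by (auto simp: hat_def s_def field_simps)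
  have "Pn n v x = (1 - s) * v (node n i) + s * v (node n (Suc i))" for v
  proof -
    have "Pn n v x = (\<Sum>j\<in>{i, Suc i}. v (node n j) * hat n j x)"
      unfolding Pn_def using i hat_outside_cell[OF assms(1) i(2,3)]
      by (intro sum.mono_neutral_right) auto
    then show ?thesis using hats by (simp add: mult.commute)
  qed
  then show ?thesis by (rule that[OF i(1) s(1,2) i(2,3) s(3)])
qed

lemma abs_convex_comb_le:
  fixes a b c s :: real
  assumes "0 \<le> s" "s \<le> 1" "\<bar>a\<bar> \<le> c" "\<bar>b\<bar> \<le> c"
  shows "\<bar>(1 - s) * a + s * b\<bar> \<le> c"
proof -
  have "\<bar>(1 - s) * a + s * b\<bar> \<le> (1 - s) * \<bar>a\<bar> + s * \<bar>b\<bar>"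
    using assms by (simp add: abs_mult order_trans[OF abs_triangle_ineq])
  also have "\<dots> \<le> (1 - s) * c + s * c"
    using assms by (intro add_mono mult_left_mono) auto
  finally show ?thesis by (simp add: algebra_simps)
qed

lemma Pn_abs_le:
  assumes "n \<ge> 1" "x \<in> {-1..1}" "\<And>j. j \<le> n \<Longrightarrow> \<bar>v (node n j)\<bar> \<le> c"
  shows "\<bar>Pn n v x\<bar> \<le> c"
proof -
  obtain i s where "i < n" "0 \<le> s" "s \<le> 1"
    "Pn n v x = (1 - s) * v (node n i) + s * v (node n (Suc i))"
    using Pn_on_cell[OF assms(1,2)] by metis
  then show ?thesis using assms(3)[of i] assms(3)[of "Suc i"] by (simp add: abs_convex_comb_le)
qed

lemma Pn_diff: "Pn n (\<lambda>y. a y - b y) x = Pn n a x - Pn n b x"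
  by (simp add: Pn_def sum_subtractf left_diff_distrib)

lemma Pn_cong_nodes: "(\<And>j. j \<le> n \<Longrightarrow> a (node n j) = b (node n j)) \<Longrightarrow> Pn n a x = Pn n b x"
  unfolding Pn_def by (intro sum.cong) auto

lemma has_real_derivative_Pn:
  assumes "contJX J v" "continuous_on {-1..1} d" "X_deriv J v d t" "t \<in> J"
  shows "((\<lambda>s. Pn n (v s) x) has_real_derivative Pn n d x) (at t within J)"
  unfolding Pn_def
  by (intro DERIV_sum DERIV_cmult_right X_deriv_imp_has_real_derivative[OF assms] node_in) simp

lemma interp_error_le_modulus:
  assumes "n \<ge> 1" "x \<in> {-1..1}"
    and "\<And>y. y \<in> {-1..1} \<Longrightarrow> \<bar>y - x\<bar> \<le> hx n \<Longrightarrow> \<bar>v y - v x\<bar> \<le> e"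
  shows "\<bar>v x - Pn n v x\<bar> \<le> e"
proof -
  obtain i s where c: "i < n" "0 \<le> s" "s \<le> 1" "node n i \<le> x" "x \<le> node n (Suc i)"
    "Pn n v x = (1 - s) * v (node n i) + s * v (node n (Suc i))"
    using Pn_on_cell[OF assms(1,2)] by metis
  have "\<bar>v (node n i) - v x\<bar> \<le> e" "\<bar>v (node n (Suc i)) - v x\<bar> \<le> e"
    using assms(3) c node_in[of i n] node_in[of "Suc i" n] node_Suc[of n i] by auto
  then have "\<bar>(1 - s) * (v (node n i) - v x) + s * (v (node n (Suc i)) - v x)\<bar> \<le> e"
    by (rule abs_convex_comb_le[OF c(2,3)])
  moreover have "v x - Pn n v x = - ((1 - s) * (v (node n i) - v x) + s * (v (node n (Suc i)) - v x))"
    using c(6) by (simp add: algebra_simps)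
  ultimately show ?thesis by (simp only: abs_minus_cancel)
qed

text \<open>Linear interpolation reproduces affine functions, so only the second-order Taylor remainder
  at the two neighbouring nodes contributes to the error.\<close>

lemma interp_error_le_second_order:
  assumes "n \<ge> 1" "x \<in> {-1..1}" "M \<ge> 0"
    and "\<And>y. y \<in> {-1..1} \<Longrightarrow> \<bar>v y - v x - (y - x) * D\<bar> \<le> M * (y - x)\<^sup>2"
  shows "\<bar>v x - Pn n v x\<bar> \<le> M * (hx n)\<^sup>2"
proof -
  obtain i s where c: "i < n" "0 \<le> s" "s \<le> 1" "node n i \<le> x" "x \<le> node n (Suc i)"
    "s * hx n = x - node n i" "Pn n v x = (1 - s) * v (node n i) + s * v (node n (Suc i))"
    using Pn_on_cell[OF assms(1,2)] by metis
  define r where "r y = v y - v x - (y - x) * D" for y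
  have "\<bar>r y\<bar> \<le> M * (hx n)\<^sup>2" if "y \<in> {node n i, node n (Suc i)}" for y
  proof -
    have "y \<in> {-1..1}" using that c node_in[of i n] node_in[of "Suc i" n] by auto
    moreover have "(y - x)\<^sup>2 \<le> (hx n)\<^sup>2"
      using that c node_Suc[of n i] by (auto intro!: power_mono simp flip: abs_le_square_iff)
    ultimately show ?thesis
      using assms(4)[of y] mult_left_mono[of "(y - x)\<^sup>2" "(hx n)\<^sup>2" M] assms(3) by (simp add: r_def)
  qed
  then have "\<bar>(1 - s) * r (node n i) + s * r (node n (Suc i))\<bar> \<le> M * (hx n)\<^sup>2"
    by (intro abs_convex_comb_le[OF c(2,3)]) auto
  moreover have "v x - Pn n v x = - ((1 - s) * r (node n i) + s * r (node n (Suc i)))"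
  proof -
    have "(1 - s) * (node n i - x) + s * (node n (Suc i) - x) = 0"
      using c(6) unfolding node_Suc by (simp add: algebra_simps; linarith)
    moreover have "(1 - s) * r (node n i) + s * r (node n (Suc i))
        = Pn n v x - v x - D * ((1 - s) * (node n i - x) + s * (node n (Suc i) - x))"
      unfolding r_def c(7) by (simp add: algebra_simps)
    ultimately show ?thesis by simp
  qed
  ultimately show ?thesis by (simp only: abs_minus_cancel)
qed

lemma C2_with_taylor_bound:
  assumes C2: "C2_with v d1 d2" and M: "\<And>z. z \<in> {-1..1} \<Longrightarrow> \<bar>d2 z\<bar> \<le> M"
    and x: "x \<in> {-1..1}" and y: "y \<in> {-1..1}"
  shows "\<bar>v y - v x - (y - x) * d1 x\<bar> \<le> M * (y - x)\<^sup>2"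
proof -
  have dv: "\<And>z. z \<in> {-1..1} \<Longrightarrow> (v has_real_derivative d1 z) (at z within {-1..1})"
   and dd: "\<And>z. z \<in> {-1..1} \<Longrightarrow> (d1 has_real_derivative d2 z) (at z within {-1..1})"
    using C2 unfolding C2_with_def by auto
  define S where "S = {min x y..max x y}"
  have S: "S \<subseteq> {-1..1}" "x \<in> S" "y \<in> S" using x y by (auto simp: S_def)
  have "\<bar>d1 z - d1 x\<bar> \<le> M * \<bar>y - x\<bar>" if "z \<in> S" for z
  proof -
    have "\<bar>d1 z - d1 x\<bar> \<le> M * \<bar>z - x\<bar>"
      using field_differentiable_bound[of "{-1..1}" d1 d2 M z x] dd M that S x by auto
    also have "\<dots> \<le> M * \<bar>y - x\<bar>"
      using that M[OF x] by (intro mult_left_mono) (auto simp: S_def)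
    finally show ?thesis .
  qed
  moreover have "((\<lambda>z. v z - z * d1 x) has_real_derivative d1 z - d1 x) (at z within S)"
    if "z \<in> S" for z
    using has_field_derivative_subset[OF dv S(1)] that S by (auto intro!: derivative_eq_intros)
  ultimately have "norm ((v y - y * d1 x) - (v x - x * d1 x)) \<le> M * \<bar>y - x\<bar> * norm (y - x)"
    using S by (intro field_differentiable_bound[of S]) (auto simp: S_def)
  then show ?thesis by (simp add: power2_eq_square abs_mult_self_eq algebra_simps)
qed

lemma interp_error_eventually_le:
  assumes "compact J" "contJX J u" "e > 0"
  shows "\<forall>\<^sub>F n in sequentially. \<forall>t\<in>J. \<forall>x\<in>{-1..1}. \<bar>u t x - Pn n (u t) x\<bar> \<le> e"
proof -
  have "uniformly_continuous_on (J \<times> {-1..1}) (\<lambda>p. u (fst p) (snd p))"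
    using assms(1) contJX_imp_continuous_on_Times[OF assms(2)]
    by (intro compact_uniformly_continuous compact_Times) auto
  then obtain d where d: "d > 0" "\<forall>p\<in>J \<times> {-1..1}. \<forall>q\<in>J \<times> {-1..1}. dist q p < d \<longrightarrow>
      dist (u (fst q) (snd q)) (u (fst p) (snd p)) < e"
    using assms(3) unfolding uniformly_continuous_on_def by metis
  have "\<forall>\<^sub>F n in sequentially. hx n < d"
    unfolding hx_def using order_tendstoD(2)[OF lim_const_over_n d(1)] .
  then show ?thesis
    using eventually_ge_at_top[of 1]
  proof eventually_elim
    case (elim n)
    show ?case
    proof (intro ballI interp_error_le_modulus[OF elim(2)])
      fix t x y assume "t \<in> J" "x \<in> {-1..1}" "y \<in> {-1..1}" "\<bar>y - x\<bar> \<le> hx n"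
      then show "\<bar>u t y - u t x\<bar> \<le> e"
        using elim(1) d(2)[rule_format, of "(t, x)" "(t, y)"]
        by (auto simp: dist_Pair_Pair dist_real_def)
    qed
  qed
qed

lemma interp_error_le_C2_uniform:
  assumes "compact J" "in_CJ_C2 J u"
  obtains M where "M \<ge> 0"
    "\<And>n t x. n \<ge> 1 \<Longrightarrow> t \<in> J \<Longrightarrow> x \<in> {-1..1} \<Longrightarrow> \<bar>u t x - Pn n (u t) x\<bar> \<le> M * (hx n)\<^sup>2"
proof -
  obtain D1 D2 where D: "\<forall>t\<in>J. C2_with (u t) (D1 t) (D2 t)" "contJX J D2"
    using assms(2) unfolding in_CJ_C2_def by blast
  have "bounded ((\<lambda>p. D2 (fst p) (snd p)) ` (J \<times> {-1..1}))"
    using assms(1) contJX_imp_continuous_on_Times[OF D(2)]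
    by (intro compact_imp_bounded compact_continuous_image compact_Times) auto
  then obtain M0 where M0: "\<forall>z\<in>(\<lambda>p. D2 (fst p) (snd p)) ` (J \<times> {-1..1}). \<bar>z\<bar> \<le> M0"
    unfolding bounded_iff by auto
  define M where "M = max M0 0"
  have M: "M \<ge> 0" "\<And>t x. t \<in> J \<Longrightarrow> x \<in> {-1..1} \<Longrightarrow> \<bar>D2 t x\<bar> \<le> M"
    using M0 unfolding M_def by force+
  show ?thesis
  proof (rule that[OF M(1)])
    fix n :: nat and t x :: real assume "n \<ge> 1" "t \<in> J" "x \<in> {-1..1}"
    then show "\<bar>u t x - Pn n (u t) x\<bar> \<le> M * (hx n)\<^sup>2"
      using D(1) M by (intro interp_error_le_second_order[of _ _ _ _ "D1 t x"] C2_with_taylor_bound) auto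
  qed
qed

section \<open>The nonlinearity is Lipschitz in the sup norm\<close>

definition sup_norm_lipschitz :: "real \<Rightarrow> (real \<Rightarrow> (real \<Rightarrow> real) \<Rightarrow> real \<Rightarrow> real) \<Rightarrow> bool" where
  "sup_norm_lipschitz K G \<longleftrightarrow> (\<forall>t a b c x. continuous_on {-1..1} a \<longrightarrow> continuous_on {-1..1} b \<longrightarrow>
     (\<forall>y\<in>{-1..1}. \<bar>a y - b y\<bar> \<le> c) \<longrightarrow> x \<in> {-1..1} \<longrightarrow> \<bar>G t a x - G t b x\<bar> \<le> K * c)"

lemma integrable_absolutely_integrable_times_continuous:
  fixes w g :: "real \<Rightarrow> real"
  assumes "w absolutely_integrable_on {a..b}" "continuous_on {a..b} g"
  shows "(\<lambda>y. w y * g y) integrable_on {a..b}"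
proof -
  have "(\<lambda>y. g y * w y) absolutely_integrable_on {a..b}"
    using assms compact_imp_bounded[OF compact_continuous_image[OF assms(2)]]
    by (intro absolutely_integrable_bounded_measurable_product_real
        continuous_imp_measurable_on_sets_lebesgue) auto
  then show ?thesis unfolding absolutely_integrable_on_def by (simp add: mult.commute)
qed

lemma Nop_lipschitz:
  assumes w_int: "\<forall>x\<in>{-1..1}. (\<lambda>y. w x y) absolutely_integrable_on {-1..1}"
    and B: "\<forall>x\<in>{-1..1}. integral {-1..1} (\<lambda>y. \<bar>w x y\<bar>) \<le> B"
    and L: "L-lipschitz_on UNIV f"
    and ca: "continuous_on {-1..1} a" and cb: "continuous_on {-1..1} b"
    and c: "\<And>y. y \<in> {-1..1} \<Longrightarrow> \<bar>a y - b y\<bar> \<le> c"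
    and x: "x \<in> {-1..1}"
  shows "\<bar>Nop w f \<xi> t a x - Nop w f \<xi> t b x\<bar> \<le> (1 + L * B) * c"
proof -
  have L0: "L \<ge> 0" using L by (simp add: lipschitz_on_def)
  have c0: "c \<ge> 0" using c[of 0] by auto
  have wx: "(\<lambda>y. w x y) absolutely_integrable_on {-1..1}" using w_int x by auto
  have cf: "continuous_on {-1..1} (\<lambda>y. f (v y))" if "continuous_on {-1..1} v" for v
    using continuous_on_compose2[OF lipschitz_on_continuous_on[OF L] that] by auto
  have pointwise: "norm (w x y * f (a y) - w x y * f (b y)) \<le> \<bar>w x y\<bar> * (L * c)"
    if "y \<in> {-1..1}" for y
  proof -
    have "\<bar>f (a y) - f (b y)\<bar> \<le> L * \<bar>a y - b y\<bar>"
      using L unfolding lipschitz_on_def by (auto simp: dist_real_def)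
    also have "\<dots> \<le> L * c" using c[OF that] L0 by (simp add: mult_left_mono)
    finally show ?thesis by (simp add: abs_mult mult_left_mono flip: right_diff_distrib)
  qed
  have "\<bar>Wop w (Fop f a) x - Wop w (Fop f b) x\<bar>
      = norm (integral {-1..1} (\<lambda>y. w x y * f (a y) - w x y * f (b y)))"
    unfolding Wop_def Fop_def
    by (simp add: integral_diff integrable_absolutely_integrable_times_continuous wx cf ca cb)
  also have "\<dots> \<le> integral {-1..1} (\<lambda>y. \<bar>w x y\<bar> * (L * c))"
    using wx pointwise absolutely_integrable_on_def[where f = "\<lambda>y. w x y"]
    by (intro integral_norm_bound_integral integrable_diff integrable_on_mult_left
        integrable_absolutely_integrable_times_continuous cf ca cb) auto
  also have "\<dots> = integral {-1..1} (\<lambda>y. \<bar>w x y\<bar>) * (L * c)" by (rule integral_mult_left)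
  also have "\<dots> \<le> B * (L * c)" using B x L0 c0 by (simp add: mult_right_mono)
  finally have "\<bar>Wop w (Fop f a) x - Wop w (Fop f b) x\<bar> \<le> B * (L * c)" .
  then show ?thesis using c[OF x] by (simp add: Nop_def algebra_simps)
qed

lemma Nop_sup_norm_lipschitz:
  assumes "\<forall>x\<in>{-1..1}. (\<lambda>y. w x y) absolutely_integrable_on {-1..1}"
    and "\<exists>B. \<forall>x\<in>{-1..1}. integral {-1..1} (\<lambda>y. \<bar>w x y\<bar>) \<le> B"
    and "\<exists>L. L-lipschitz_on UNIV f"
  obtains K where "K \<ge> 0" "sup_norm_lipschitz K (Nop w f \<xi>)"
proof -
  obtain L B where L: "L-lipschitz_on UNIV f" and B: "\<forall>x\<in>{-1..1}. integral {-1..1} (\<lambda>y. \<bar>w x y\<bar>) \<le> B"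
    using assms(2,3) by blast
  have "\<forall>x\<in>{-1..1}. integral {-1..1} (\<lambda>y. \<bar>w x y\<bar>) \<le> max B 0" using B by force
  moreover have "L \<ge> 0" using L by (simp add: lipschitz_on_def)
  ultimately show ?thesis
    using that[of "1 + L * max B 0"] Nop_lipschitz[OF assms(1) _ L]
    unfolding sup_norm_lipschitz_def by simp
qed

section \<open>Gronwall estimate for the semi-discrete error\<close>

lemma DERIV_within_nonneg_imp_le:
  fixes g g' :: "real \<Rightarrow> real"
  assumes "a \<le> b"
    and "\<And>s. s \<in> {a..b} \<Longrightarrow> (g has_real_derivative g' s) (at s within {a..b})"
    and "\<And>s. s \<in> {a..b} \<Longrightarrow> g' s \<ge> 0"
  shows "g a \<le> g b"
proof (rule DERIV_nonneg_imp_increasing_open[OF assms(1)])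
  fix x assume "a < x" "x < b"
  then show "\<exists>y. (g has_real_derivative y) (at x) \<and> 0 \<le> y"
    using assms(2,3)[of x] at_within_Icc_at[of a x b] by auto
next
  show "continuous_on {a..b} g"
    using assms(2) DERIV_continuous continuous_on_eq_continuous_within by blast
qed

lemma abs_diff_le_of_deriv_bound:
  fixes p \<Phi> :: "real \<Rightarrow> real"
  assumes "a \<le> b"
    and "\<And>s. s \<in> {a..b} \<Longrightarrow> (p has_real_derivative p' s) (at s within {a..b})"
    and "\<And>s. s \<in> {a..b} \<Longrightarrow> (\<Phi> has_real_derivative \<Phi>' s) (at s within {a..b})"
    and "\<And>s. s \<in> {a..b} \<Longrightarrow> \<bar>p' s\<bar> \<le> \<Phi>' s"
  shows "\<bar>p b - p a\<bar> \<le> \<Phi> b - \<Phi> a"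
proof -
  have "(\<lambda>s. \<Phi> s - p s) a \<le> (\<lambda>s. \<Phi> s - p s) b"
  proof (rule DERIV_within_nonneg_imp_le[OF assms(1)])
    fix s assume s: "s \<in> {a..b}"
    show "((\<lambda>s. \<Phi> s - p s) has_real_derivative \<Phi>' s - p' s) (at s within {a..b})"
      using assms(2,3)[OF s] by (rule DERIV_diff[rotated])
    show "0 \<le> \<Phi>' s - p' s" using assms(4)[OF s] by linarith
  qed
  moreover have "(\<lambda>s. \<Phi> s + p s) a \<le> (\<lambda>s. \<Phi> s + p s) b"
  proof (rule DERIV_within_nonneg_imp_le[OF assms(1)])
    fix s assume s: "s \<in> {a..b}"
    show "((\<lambda>s. \<Phi> s + p s) has_real_derivative \<Phi>' s + p' s) (at s within {a..b})"
      using assms(2,3)[OF s] by (rule DERIV_add[rotated])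
    show "0 \<le> \<Phi>' s + p' s" using assms(4)[OF s] by linarith
  qed
  ultimately show ?thesis by simp
qed

lemma gronwall_integral:
  fixes \<phi> :: "real \<Rightarrow> real"
  assumes "a \<le> b" "continuous_on {a..b} \<phi>" "K \<ge> 0"
    and le: "\<And>s. s \<in> {a..b} \<Longrightarrow> \<phi> s \<le> \<delta> + K * integral {a..s} \<phi>"
  shows "\<phi> b \<le> \<delta> * exp (K * (b - a))"
proof -
  define \<Phi> where "\<Phi> s = \<delta> + K * integral {a..s} \<phi>" for s
  define E where "E s = exp (- K * (s - a))" for s
  have "- (\<Phi> a * E a) \<le> - (\<Phi> b * E b)"
  proof (rule DERIV_within_nonneg_imp_le[OF assms(1)])
    fix s assume s: "s \<in> {a..b}"
    have "(\<Phi> has_real_derivative K * \<phi> s) (at s within {a..b})"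
      unfolding \<Phi>_def using integral_has_real_derivative[OF assms(2) s]
      by (auto intro!: derivative_eq_intros)
    moreover have "(E has_real_derivative - K * E s) (at s within {a..b})"
      unfolding E_def by (auto intro!: derivative_eq_intros)
    ultimately show "((\<lambda>s. - (\<Phi> s * E s)) has_real_derivative
        - (K * \<phi> s * E s + - K * E s * \<Phi> s)) (at s within {a..b})"
      by (intro DERIV_minus DERIV_mult)
    have "K * \<phi> s * E s \<le> K * \<Phi> s * E s"
      using le[OF s] assms(3) by (intro mult_right_mono mult_left_mono) (auto simp: \<Phi>_def E_def)
    then show "0 \<le> - (K * \<phi> s * E s + - K * E s * \<Phi> s)"
      by (simp add: algebra_simps)
  qed
  then have "\<Phi> b * E b \<le> \<delta>"
    by (simp add: \<Phi>_def E_def)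
  then have "\<Phi> b * E b * exp (K * (b - a)) \<le> \<delta> * exp (K * (b - a))"
    by (rule mult_right_mono) simp
  moreover have "E b * exp (K * (b - a)) = 1"
    by (simp add: E_def flip: exp_add)
  ultimately show ?thesis
    using le[of b] assms(1) by (simp add: \<Phi>_def mult.assoc)
qed

text \<open>Only three properties of P_n enter: it commutes with the time derivative, it is bounded by
  its nodal values, and it sees only nodal values, so P_n u(t0) = P_n u0.\<close>

lemma Pn_semidiscrete_error_le:
  fixes G :: "real \<Rightarrow> (real \<Rightarrow> real) \<Rightarrow> (real \<Rightarrow> real)" and u U :: "real \<Rightarrow> real \<Rightarrow> real"
  assumes n: "n \<ge> 1"
    and u_sol: "is_solution {t0..t1} t0 G u0 u"
    and U_sol: "is_solution {t0..t1} t0 (\<lambda>t v. Pn n (G t v)) (Pn n u0) U"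
    and G_lip: "sup_norm_lipschitz K G"
    and s: "s \<in> {t0..t1}" and y: "y \<in> {-1..1}"
  shows "\<bar>Pn n (u s) y - U s y\<bar> \<le> K * integral {t0..s} (\<lambda>r. supn (\<lambda>x. u r x - U r x))"
proof -
  define J where "J = {t0..t1}"
  have cu: "contJX J u" and cU: "contJX J U"
    and cGu: "\<And>r. r \<in> J \<Longrightarrow> continuous_on {-1..1} (G r (u r))"
    and cGU: "\<And>r. r \<in> J \<Longrightarrow> continuous_on {-1..1} (Pn n (G r (U r)))"
    and du: "\<And>r. r \<in> J \<Longrightarrow> X_deriv J u (G r (u r)) r"
    and dU: "\<And>r. r \<in> J \<Longrightarrow> X_deriv J U (Pn n (G r (U r))) r"
    and u_init: "\<And>y. y \<in> {-1..1} \<Longrightarrow> u t0 y = u0 y"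
    and U_init: "\<And>y. y \<in> {-1..1} \<Longrightarrow> U t0 y = Pn n u0 y"
    using u_sol U_sol unfolding is_solution_def contJX_def Xsp_def J_def by auto
  have cont: "continuous_on {-1..1} (u r)" "continuous_on {-1..1} (U r)" if "r \<in> J" for r
    using cu cU that unfolding contJX_def Xsp_def by auto
  define \<phi> where "\<phi> r = supn (\<lambda>x. u r x - U r x)" for r
  have \<phi>_ge: "\<bar>u r z - U r z\<bar> \<le> \<phi> r" if "r \<in> J" "z \<in> {-1..1}" for r z
    unfolding \<phi>_def using cont that by (intro abs_le_supn) (auto intro!: continuous_intros)
  have sub: "{t0..s} \<subseteq> J" "t0 \<le> s" using s by (auto simp: J_def)
  have "\<bar>(Pn n (u s) y - U s y) - (Pn n (u t0) y - U t0 y)\<bar>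
      \<le> K * integral {t0..s} \<phi> - K * integral {t0..t0} \<phi>"
  proof (rule abs_diff_le_of_deriv_bound[OF sub(2)])
    fix r assume "r \<in> {t0..s}"
    then have r: "r \<in> J" using sub by auto
    show "((\<lambda>r. Pn n (u r) y - U r y) has_real_derivative
        Pn n (G r (u r)) y - Pn n (G r (U r)) y) (at r within {t0..s})"
      by (intro has_field_derivative_subset[OF _ sub(1)] DERIV_diff has_real_derivative_Pn
          X_deriv_imp_has_real_derivative cu cU cGu cGU du dU r y)
    show "((\<lambda>r. K * integral {t0..r} \<phi>) has_real_derivative K * \<phi> r) (at r within {t0..s})"
      using continuous_on_supn[OF contJX_diff[OF cu cU]] sub \<open>r \<in> {t0..s}\<close> unfolding \<phi>_def
      by (intro DERIV_cmult integral_has_real_derivative) (auto intro: continuous_on_subset)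
    have "\<bar>Pn n (\<lambda>z. G r (u r) z - G r (U r) z) y\<bar> \<le> K * \<phi> r"
      using r cont \<phi>_ge node_in G_lip unfolding sup_norm_lipschitz_def
      by (intro Pn_abs_le[OF n y]) auto
    then show "\<bar>Pn n (G r (u r)) y - Pn n (G r (U r)) y\<bar> \<le> K * \<phi> r"
      by (simp add: Pn_diff)
  qed
  moreover have "Pn n (u t0) y = U t0 y"
    using u_init node_in U_init[OF y] by (auto intro: Pn_cong_nodes)
  ultimately show ?thesis by (simp add: \<phi>_def[abs_def])
qed

lemma semidiscrete_error_le:
  fixes G :: "real \<Rightarrow> (real \<Rightarrow> real) \<Rightarrow> (real \<Rightarrow> real)" and u U :: "real \<Rightarrow> real \<Rightarrow> real"
  assumes n: "n \<ge> 1" and K: "K \<ge> 0"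
    and u_sol: "is_solution {t0..t1} t0 G u0 u"
    and U_sol: "is_solution {t0..t1} t0 (\<lambda>t v. Pn n (G t v)) (Pn n u0) U"
    and G_lip: "sup_norm_lipschitz K G"
    and interp: "\<And>t x. t \<in> {t0..t1} \<Longrightarrow> x \<in> {-1..1} \<Longrightarrow> \<bar>u t x - Pn n (u t) x\<bar> \<le> \<delta>"
    and t: "t \<in> {t0..t1}"
  shows "supn (\<lambda>x. u t x - U t x) \<le> \<delta> * exp (K * (t - t0))"
proof -
  define \<phi> where "\<phi> s = supn (\<lambda>x. u s x - U s x)" for s
  have "contJX {t0..t1} u" "contJX {t0..t1} U"
    using u_sol U_sol unfolding is_solution_def by auto
  then have \<phi>_cont: "continuous_on {t0..t1} \<phi>"
    unfolding \<phi>_def by (intro continuous_on_supn contJX_diff)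
  have "\<phi> s \<le> \<delta> + K * integral {t0..s} \<phi>" if "s \<in> {t0..t}" for s
  proof -
    have s: "s \<in> {t0..t1}" using that t by auto
    have "\<bar>u s y - U s y\<bar> \<le> \<delta> + K * integral {t0..s} \<phi>" if "y \<in> {-1..1}" for y
      using interp[OF s that] Pn_semidiscrete_error_le[OF n u_sol U_sol G_lip s that]
      unfolding \<phi>_def by linarith
    then show ?thesis by (subst \<phi>_def) (rule supn_least)
  qed
  then show ?thesis
    using t \<phi>_cont K unfolding \<phi>_def
    by (intro gronwall_integral[of t0 t]) (auto intro: continuous_on_subset)
qed

lemma semidiscrete_error_normCJX_le:
  assumes "n \<ge> 1" "K \<ge> 0" "t0 \<le> t1"
    and "is_solution {t0..t1} t0 G u0 u"
    and "is_solution {t0..t1} t0 (\<lambda>t v. Pn n (G t v)) (Pn n u0) U"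
    and "sup_norm_lipschitz K G"
    and interp: "\<And>t x. t \<in> {t0..t1} \<Longrightarrow> x \<in> {-1..1} \<Longrightarrow> \<bar>u t x - Pn n (u t) x\<bar> \<le> \<delta>"
  shows "0 \<le> normCJX {t0..t1} (\<lambda>t x. u t x - U t x) \<and>
    normCJX {t0..t1} (\<lambda>t x. u t x - U t x) \<le> \<delta> * exp (K * (t1 - t0))"
proof (rule normCJX_bounds)
  show "t0 \<in> {t0..t1}" using assms(3) by simp
  fix t assume t: "t \<in> {t0..t1}"
  have "\<delta> \<ge> 0" using interp[OF t, of 0] by simp
  then have "\<delta> * exp (K * (t - t0)) \<le> \<delta> * exp (K * (t1 - t0))"
    using t assms(2) by (intro mult_left_mono) (simp_all add: mult_left_mono)
  with semidiscrete_error_le[OF assms(1,2,4-7) t]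
  have "supn (\<lambda>x. u t x - U t x) \<le> \<delta> * exp (K * (t1 - t0))" by (rule order_trans)
  moreover have "continuous_on {-1..1} (\<lambda>x. u t x - U t x)"
    using assms(4,5) t unfolding is_solution_def contJX_def Xsp_def by (auto intro!: continuous_intros)
  ultimately show "continuous_on {-1..1} (\<lambda>x. u t x - U t x) \<and>
      supn (\<lambda>x. u t x - U t x) \<le> \<delta> * exp (K * (t1 - t0))" by blast
qed

lemma semidiscrete_error_tendsto_zero:
  assumes "K \<ge> 0" "t0 \<le> t1" "sup_norm_lipschitz K G"
    and u_sol: "is_solution {t0..t1} t0 G u0 u"
    and U_sol: "\<And>n. n \<ge> 1 \<Longrightarrow> is_solution {t0..t1} t0 (\<lambda>t v. Pn n (G t v)) (Pn n u0) (U n)"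
  shows "(\<lambda>n. normCJX {t0..t1} (\<lambda>t x. u t x - U n t x)) \<longlonglongrightarrow> 0"
proof (rule tendstoI)
  fix e :: real assume "e > 0"
  define \<epsilon> where "\<epsilon> = e / (2 * exp (K * (t1 - t0)))"
  have "\<forall>\<^sub>F n in sequentially. \<forall>t\<in>{t0..t1}. \<forall>x\<in>{-1..1}. \<bar>u t x - Pn n (u t) x\<bar> \<le> \<epsilon>"
    using u_sol \<open>e > 0\<close> unfolding is_solution_def \<epsilon>_def by (intro interp_error_eventually_le) auto
  then show "\<forall>\<^sub>F n in sequentially. dist (normCJX {t0..t1} (\<lambda>t x. u t x - U n t x)) 0 < e"
    using eventually_ge_at_top[of 1]
  proof eventually_elim
    case (elim n)
    have "0 \<le> normCJX {t0..t1} (\<lambda>t x. u t x - U n t x) \<and>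
        normCJX {t0..t1} (\<lambda>t x. u t x - U n t x) \<le> \<epsilon> * exp (K * (t1 - t0))"
      by (rule semidiscrete_error_normCJX_le[OF elim(2) assms(1,2) u_sol U_sol[OF elim(2)] assms(3)])
        (use elim(1) in auto)
    then show ?case using \<open>e > 0\<close> by (simp add: \<epsilon>_def)
  qed
qed

lemma semidiscrete_error_le_hx_squared:
  assumes "K \<ge> 0" "t0 \<le> t1" "sup_norm_lipschitz K G"
    and u_sol: "is_solution {t0..t1} t0 G u0 u"
    and U_sol: "\<And>n. n \<ge> 1 \<Longrightarrow> is_solution {t0..t1} t0 (\<lambda>t v. Pn n (G t v)) (Pn n u0) (U n)"
    and C2: "in_CJ_C2 {t0..t1} u"
  shows "\<exists>\<kappa>>0. \<forall>n\<ge>1. normCJX {t0..t1} (\<lambda>t x. u t x - U n t x) \<le> \<kappa> * (hx n)\<^sup>2"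
proof -
  obtain M where "M \<ge> 0" and M: "\<And>n t x. n \<ge> 1 \<Longrightarrow> t \<in> {t0..t1} \<Longrightarrow> x \<in> {-1..1} \<Longrightarrow>
      \<bar>u t x - Pn n (u t) x\<bar> \<le> M * (hx n)\<^sup>2"
    using interp_error_le_C2_uniform[OF _ C2] by auto
  have "normCJX {t0..t1} (\<lambda>t x. u t x - U n t x) \<le> (M * exp (K * (t1 - t0)) + 1) * (hx n)\<^sup>2"
    if n: "n \<ge> 1" for n
  proof -
    have "normCJX {t0..t1} (\<lambda>t x. u t x - U n t x) \<le> M * (hx n)\<^sup>2 * exp (K * (t1 - t0))"
      using semidiscrete_error_normCJX_le[OF n assms(1,2) u_sol U_sol[OF n] assms(3) M[OF n]] by simp
    also have "\<dots> \<le> (M * exp (K * (t1 - t0)) + 1) * (hx n)\<^sup>2" by (simp add: algebra_simps)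
    finally show ?thesis .
  qed
  then show ?thesis
    using \<open>M \<ge> 0\<close> by (intro exI[of _ "M * exp (K * (t1 - t0)) + 1"]) (auto simp: add_nonneg_pos)
qed

theorem corollary5p1:
  fixes w :: "real \<Rightarrow> real \<Rightarrow> real" and f :: "real \<Rightarrow> real"
    and \<xi> :: "real \<Rightarrow> real \<Rightarrow> real" and t0 T :: real
    and u0 :: "real \<Rightarrow> real" and u :: "real \<Rightarrow> real \<Rightarrow> real"
    and un :: "nat \<Rightarrow> real \<Rightarrow> real \<Rightarrow> real"
  assumes T_pos: "T > 0"
    and w_int: "\<forall>x\<in>{-1..1}. (\<lambda>y. w x y) absolutely_integrable_on {-1..1}"
    and w_cont: "\<forall>e>0. \<exists>h>0. \<forall>x\<in>{-1..1}. \<forall>z\<in>{-1..1}. \<bar>x - z\<bar> \<le> h \<longrightarrow>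
                   integral {-1..1} (\<lambda>y. \<bar>w x y - w z y\<bar>) \<le> e"
    and w_bdd: "\<exists>B. \<forall>x\<in>{-1..1}. integral {-1..1} (\<lambda>y. \<bar>w x y\<bar>) \<le> B"
    and f_bdd: "bounded (range f)"
    and f_diff: "\<forall>s. f differentiable (at s)"
    and f_lip: "\<exists>L. L-lipschitz_on UNIV f"
    and f'_bdd: "bounded (range (deriv f))"
    and xi_cont: "contJX {t0..t0+T} \<xi>"
    and u0_X: "u0 \<in> Xsp"
    and u_sol: "is_solution {t0..t0+T} t0 (Nop w f \<xi>) u0 u"
    and un_sol: "\<forall>n\<ge>1. is_solution {t0..t0+T} t0 (\<lambda>t v. Pn n (Nop w f \<xi> t v)) (Pn n u0) (un n)"
  shows "((\<lambda>n. normCJX {t0..t0+T} (\<lambda>t x. u t x - un n t x)) \<longlonglongrightarrow> 0) \<and>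
         (in_CJ_C2 {t0..t0+T} u \<longrightarrow>
         (\<exists>\<kappa>>0. \<forall>n\<ge>1. normCJX {t0..t0+T} (\<lambda>t x. u t x - un n t x) \<le> \<kappa> * (hx n)^2))"
proof -
  obtain K where K: "K \<ge> 0" and N: "sup_norm_lipschitz K (Nop w f \<xi>)"
    using Nop_sup_norm_lipschitz[OF w_int w_bdd f_lip] by blast
  have t: "t0 \<le> t0 + T" using T_pos by simp
  note U_sol = un_sol[rule_format]
  show ?thesis
    using semidiscrete_error_tendsto_zero[OF K t N u_sol U_sol]
      semidiscrete_error_le_hx_squared[OF K t N u_sol U_sol] by blast
qed

end
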